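(* There is a function $s$ with $s(p)=2^{\mathcal{O}(p^3)}$ such that for every graph $G$ of vertex integrity $p$ and every set $\mathcal{B}$ of balls of $G$, the positive non-clashing teaching dimension of $\mathcal{B}$ is at most $s(p)$.
   Context: For a graph $G$, $r\ge 0$ and $v\in V(G)$, the ball $B_r(v)$ is the set of vertices at distance at most $r$ from $v$. For a set $\mathcal{B}$ of balls of $G$, a positive teaching map $T$ assigns to each $B\in\mathcal{B}$ a set $T(B)\subseteq B$; its dimension is $\max_{B\in\mathcal{B}}|T(B)|$; $T$ is non-clashing if for every pair of distinct $B_1,B_2\in\mathcal{B}$ there is $w\in T(B_1)\cup T(B_2)$ with $w\notin B_1\cap B_2$. The positive non-clashing teaching dimension of $\mathcal{B}$ is the minimum dimension of a positive non-clashing teaching map for $\mathcal{B}$. The vertex integrity of $G$ is the minimum $b$ such that there is $X\subset V(G)$ with $|V(H)\cup X|\le b$ for every connected component $H$ of $G-X$. *)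

theory Defs
  imports Complex_Main
begin

definition graph :: "'a set \<Rightarrow> ('a \<times> 'a) set \<Rightarrow> bool" where
  "graph V E \<longleftrightarrow> finite V \<and> E \<subseteq> V \<times> V \<and> sym E \<and> irrefl E"

definition ball_g :: "'a set \<Rightarrow> ('a \<times> 'a) set \<Rightarrow> nat \<Rightarrow> 'a \<Rightarrow> 'a set" where
  "ball_g V E r v = {u \<in> V. \<exists>k\<le>r. (v, u) \<in> E ^^ k}"

definition balls_g :: "'a set \<Rightarrow> ('a \<times> 'a) set \<Rightarrow> 'a set set" where
  "balls_g V E = {ball_g V E r v | r v. v \<in> V}"

definition positive_teaching_map :: "('a set \<Rightarrow> 'a set) \<Rightarrow> 'a set set \<Rightarrow> bool" where
  "positive_teaching_map T \<B> \<longleftrightarrow> (\<forall>B\<in>\<B>. T B \<subseteq> B)"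

definition non_clashing :: "('a set \<Rightarrow> 'a set) \<Rightarrow> 'a set set \<Rightarrow> bool" where
  "non_clashing T \<B> \<longleftrightarrow>
     (\<forall>B1\<in>\<B>. \<forall>B2\<in>\<B>. B1 \<noteq> B2 \<longrightarrow> (\<exists>w \<in> T B1 \<union> T B2. w \<notin> B1 \<inter> B2))"

definition teaching_dim :: "('a set \<Rightarrow> 'a set) \<Rightarrow> 'a set set \<Rightarrow> nat" where
  "teaching_dim T \<B> = Sup (card ` T ` \<B>)"

definition pos_nc_teaching_dim :: "'a set set \<Rightarrow> nat" where
  "pos_nc_teaching_dim \<B> =
     Inf {teaching_dim T \<B> | T. positive_teaching_map T \<B> \<and> non_clashing T \<B>}"

definition component_g :: "'a set \<Rightarrow> ('a \<times> 'a) set \<Rightarrow> 'a set \<Rightarrow> 'a \<Rightarrow> 'a set" where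
  "component_g V E X v = {u \<in> V - X. (v, u) \<in> (E \<inter> ((V - X) \<times> (V - X)))\<^sup>*}"

definition vertex_integrity :: "'a set \<Rightarrow> ('a \<times> 'a) set \<Rightarrow> nat" where
  "vertex_integrity V E = Inf {b. \<exists>X \<subseteq> V. card X \<le> b \<and>
       (\<forall>v \<in> V - X. card (component_g V E X v \<union> X) \<le> b)}"

end

theory Submission
  imports Defs "HOL-Library.FuncSet"
begin

(*
  Fix a separator X with |X| <= p such that every component C of G - X has |C \<union> X| <= p.
  The profile of a vertex u outside X records, for every x in X, the length of a shortest walk
  from x to u all of whose later vertices lie in the component of u (or that there is none).
  A shortest walk from a centre v to a vertex w in a component not containing v enters that
  component through a last separator vertex, so whether a ball around v contains w depends only
  on the profile of w. Hence a ball that contains B \<inter> X and, for every profile occurring in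
  B - X, either two such vertices in distinct components or all of B inside the only component
  carrying it, contains all of B: its centre misses one of the two components. Teaching every
  ball by such a set is non-clashing, and since profiles take at most (p^2 + 2)^p values the
  sets have size at most p + 2p (p^2 + 2)^p = 2^O(p^3).
*)

lemma component_g_subset: "component_g V E X w \<subseteq> V - X"
  unfolding component_g_def by auto

lemma self_in_component_g: "w \<in> V - X \<Longrightarrow> w \<in> component_g V E X w"
  unfolding component_g_def by auto

lemma component_g_eq:
  assumes "sym E" and "v \<in> component_g V E X w"
  shows "component_g V E X v = component_g V E X w"
proof -
  let ?F = "E \<inter> ((V - X) \<times> (V - X))"
  have "sym (?F\<^sup>*)"
    using assms(1) by (intro sym_rtrancl) (auto simp: sym_def)
  moreover have wv: "(w, v) \<in> ?F\<^sup>*"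
    using assms(2) unfolding component_g_def by auto
  ultimately have "(v, w) \<in> ?F\<^sup>*"
    by (auto simp: sym_def)
  with wv show ?thesis
    unfolding component_g_def by (auto intro: rtrancl_trans)
qed

lemma component_g_eq_if_adjacent:
  assumes "sym E" and "(y, w) \<in> E" and "y \<in> V - X" and "w \<in> V - X"
  shows "component_g V E X y = component_g V E X w"
proof -
  have "y \<in> component_g V E X w"
    unfolding component_g_def using assms by (auto simp: sym_def intro!: r_into_rtrancl)
  then show ?thesis
    using component_g_eq[OF assms(1)] by blast
qed

definition edges_into_component :: "'a set \<Rightarrow> ('a \<times> 'a) set \<Rightarrow> 'a set \<Rightarrow> 'a \<Rightarrow> ('a \<times> 'a) set" where
  "edges_into_component V E X w = E \<inter> ((component_g V E X w \<union> X) \<times> component_g V E X w)"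

definition profile :: "'a set \<Rightarrow> ('a \<times> 'a) set \<Rightarrow> 'a set \<Rightarrow> 'a \<Rightarrow> 'a \<Rightarrow> nat option" where
  "profile V E X u = (\<lambda>x\<in>X.
     if \<exists>k. (x, u) \<in> edges_into_component V E X u ^^ k
     then Some (LEAST k. (x, u) \<in> edges_into_component V E X u ^^ k) else None)"

lemma profile_SomeD:
  "x \<in> X \<Longrightarrow> profile V E X u x = Some k \<Longrightarrow> (x, u) \<in> edges_into_component V E X u ^^ k"
  unfolding profile_def by (auto split: if_splits intro: LeastI_ex)

lemma profile_SomeI:
  assumes "x \<in> X" and "(x, u) \<in> edges_into_component V E X u ^^ k"
  shows "\<exists>j\<le>k. profile V E X u x = Some j"
  using assms unfolding profile_def by (auto intro: Least_le)

lemma walk_enters_component_through_separator: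
  assumes "graph V E" and "w \<in> V - X" and "(v, w) \<in> E ^^ m"
    and "v \<notin> component_g V E X w"
  shows "\<exists>x\<in>X. \<exists>a k. a + k \<le> m \<and> (v, x) \<in> E ^^ a \<and> (x, w) \<in> edges_into_component V E X w ^^ k"
  using assms(2-)
proof (induction m arbitrary: w)
  case 0
  then show ?case using self_in_component_g[of w V X E] by auto
next
  case (Suc m)
  from Suc.prems(2) obtain y where vy: "(v, y) \<in> E ^^ m" and yw: "(y, w) \<in> E" by auto
  have w_comp: "w \<in> component_g V E X w" using Suc.prems(1) by (rule self_in_component_g)
  show ?case
  proof (cases "y \<in> X")
    case True
    then have "(y, w) \<in> edges_into_component V E X w"
      unfolding edges_into_component_def using yw w_comp by auto
    then show ?thesis using True vy by (intro bexI[of _ y] exI[of _ m] exI[of _ 1]) auto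
  next
    case False
    have "E \<subseteq> V \<times> V" and "sym E" using assms(1) unfolding graph_def by auto
    with False yw have y: "y \<in> V - X" by auto
    have same: "component_g V E X y = component_g V E X w"
      using component_g_eq_if_adjacent[OF \<open>sym E\<close> yw y Suc.prems(1)] .
    from Suc.IH[OF y vy] Suc.prems(3) same obtain x a k where
      "x \<in> X" "a + k \<le> m" "(v, x) \<in> E ^^ a" "(x, y) \<in> edges_into_component V E X w ^^ k"
      unfolding edges_into_component_def by auto
    moreover have "(y, w) \<in> edges_into_component V E X w"
      unfolding edges_into_component_def using yw w_comp same self_in_component_g[OF y] by auto
    ultimately show ?thesis
      by (intro bexI[of _ x] exI[of _ a] exI[of _ "Suc k"]) auto
  qed
qed

lemma ball_g_mem_if_same_profile:
  assumes "graph V E" and "u \<in> V" and "w \<in> V - X"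
    and "w \<in> ball_g V E r v" and "v \<notin> component_g V E X w"
    and "profile V E X w = profile V E X u"
  shows "u \<in> ball_g V E r v"
proof -
  from assms(4) obtain m where "m \<le> r" and "(v, w) \<in> E ^^ m" unfolding ball_g_def by auto
  with walk_enters_component_through_separator[OF assms(1,3) _ assms(5)]
  obtain x a k where "x \<in> X" "a + k \<le> r" "(v, x) \<in> E ^^ a"
    and xw: "(x, w) \<in> edges_into_component V E X w ^^ k"
    by (meson le_trans)
  from profile_SomeI[OF \<open>x \<in> X\<close> xw] assms(6) obtain j where "j \<le> k" "profile V E X u x = Some j"
    by auto
  then have "(x, u) \<in> edges_into_component V E X u ^^ j" using \<open>x \<in> X\<close> profile_SomeD by metis
  then have "(x, u) \<in> E ^^ j"
    by (rule relpowp_mono[to_set, rotated]) (auto simp: edges_into_component_def)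
  with \<open>(v, x) \<in> E ^^ a\<close> have "(v, u) \<in> E ^^ (a + j)" by (rule relpow_trans)
  moreover have "a + j \<le> r" using \<open>j \<le> k\<close> \<open>a + k \<le> r\<close> by linarith
  ultimately show ?thesis unfolding ball_g_def using assms(2) by auto
qed

definition profile_spans :: "'a set \<Rightarrow> ('a \<times> 'a) set \<Rightarrow> 'a set \<Rightarrow> 'a set \<Rightarrow> 'a set \<Rightarrow> bool" where
  "profile_spans V E X S B \<longleftrightarrow> (\<forall>u \<in> B - S. u \<notin> X \<and>
     (\<exists>w1 \<in> S - X. \<exists>w2 \<in> S - X. component_g V E X w1 \<noteq> component_g V E X w2 \<and>
        profile V E X w1 = profile V E X u \<and> profile V E X w2 = profile V E X u))"

lemma ball_g_superset_if_profile_spans: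
  assumes "graph V E" and "B \<subseteq> V" and "S \<subseteq> ball_g V E r v" and "profile_spans V E X S B"
  shows "B \<subseteq> ball_g V E r v"
proof
  fix u assume u: "u \<in> B"
  show "u \<in> ball_g V E r v"
  proof (cases "u \<in> S")
    case True
    then show ?thesis using assms(3) by auto
  next
    case False
    with u assms(4) obtain w1 w2 where w: "w1 \<in> S - X" "w2 \<in> S - X"
      "component_g V E X w1 \<noteq> component_g V E X w2"
      "profile V E X w1 = profile V E X u" "profile V E X w2 = profile V E X u"
      unfolding profile_spans_def by blast
    have "sym E" using assms(1) unfolding graph_def by auto
    have "S \<subseteq> V" using assms(3) unfolding ball_g_def by auto
    from w(3) have "v \<notin> component_g V E X w1 \<or> v \<notin> component_g V E X w2"
      using component_g_eq[OF \<open>sym E\<close>] by metis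
    then show ?thesis
      using ball_g_mem_if_same_profile[OF assms(1)] w u assms(2,3) \<open>S \<subseteq> V\<close> by blast
  qed
qed

lemma profile_in_PiE:
  assumes "finite V" and "X \<subseteq> V" and "u \<in> V - X" and "card (component_g V E X u \<union> X) \<le> p"
  shows "profile V E X u \<in> X \<rightarrow>\<^sub>E insert None (Some ` {..p * p})"
proof -
  let ?C = "component_g V E X u"
  let ?R = "edges_into_component V E X u"
  have "?C \<union> X \<subseteq> V"
    using component_g_subset[of V E X u] assms(2) by blast
  then have "finite (?C \<union> X)"
    using assms(1) by (rule finite_subset)
  moreover have "?R \<subseteq> (?C \<union> X) \<times> (?C \<union> X)"
    unfolding edges_into_component_def by auto
  ultimately have "finite ?R" and "card ?R \<le> card (?C \<union> X) * card (?C \<union> X)"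
    by (metis finite_SigmaI finite_subset, metis card_cartesian_product card_mono finite_SigmaI)
  with assms(4) have card_R: "card ?R \<le> p * p"
    by (meson le_trans mult_le_mono)
  have "k \<le> p * p" if x: "x \<in> X" and k: "profile V E X u x = Some k" for x k
  proof -
    from profile_SomeD[OF x k] relpow_finite_bounded[OF \<open>finite ?R\<close>]
    obtain n where "n \<le> card ?R" and "(x, u) \<in> ?R ^^ n" by blast
    with profile_SomeI[OF x] k have "k \<le> n" by fastforce
    with \<open>n \<le> card ?R\<close> card_R show ?thesis by linarith
  qed
  then show ?thesis
    by (auto simp: PiE_def Pi_def profile_def split: option.splits)
qed

lemma card_profiles_le:
  assumes "finite V" and "X \<subseteq> V" and "card X \<le> p"
    and "\<forall>v \<in> V - X. card (component_g V E X v \<union> X) \<le> p" and "A \<subseteq> V - X"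
  shows "card (profile V E X ` A) \<le> (p * p + 2) ^ p"
proof -
  have "finite X" using assms(1,2) by (rule finite_subset[rotated])
  have "profile V E X ` A \<subseteq> X \<rightarrow>\<^sub>E insert None (Some ` {..p * p})"
  proof (rule image_subsetI)
    fix u assume "u \<in> A"
    with assms(5) have "u \<in> V - X" by blast
    with assms(4) show "profile V E X u \<in> X \<rightarrow>\<^sub>E insert None (Some ` {..p * p})"
      by (intro profile_in_PiE[OF assms(1,2)]) auto
  qed
  then have "card (profile V E X ` A) \<le> card (X \<rightarrow>\<^sub>E insert None (Some ` {..p * p}))"
    using \<open>finite X\<close> by (intro card_mono finite_PiE) auto
  also have "\<dots> = (p * p + 2) ^ card X"
    using \<open>finite X\<close> by (simp add: card_PiE card_image)
  also have "\<dots> \<le> (p * p + 2) ^ p"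
    using assms(3) by (intro power_increasing) auto
  finally show ?thesis .
qed

definition components_with_profile ::
    "'a set \<Rightarrow> ('a \<times> 'a) set \<Rightarrow> 'a set \<Rightarrow> 'a set \<Rightarrow> ('a \<Rightarrow> nat option) \<Rightarrow> 'a set set" where
  "components_with_profile V E X B \<pi> = component_g V E X ` {w \<in> B - X. profile V E X w = \<pi>}"

definition profile_sample ::
    "'a set \<Rightarrow> ('a \<times> 'a) set \<Rightarrow> 'a set \<Rightarrow> 'a set \<Rightarrow> (('a \<Rightarrow> nat option) \<Rightarrow> 'a set set) \<Rightarrow> 'a set" where
  "profile_sample V E X B P = (B \<inter> X) \<union> (\<Union>\<pi> \<in> profile V E X ` (B - X). \<Union>C \<in> P \<pi>. B \<inter> C)"

lemma profile_spans_profile_sample: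
  assumes "B \<subseteq> V"
    and sub: "\<And>\<pi>. P \<pi> \<subseteq> components_with_profile V E X B \<pi>"
    and all_or_two: "\<And>\<pi>. components_with_profile V E X B \<pi> \<subseteq> P \<pi> \<or> (\<exists>C1 \<in> P \<pi>. \<exists>C2 \<in> P \<pi>. C1 \<noteq> C2)"
  shows "profile_spans V E X (profile_sample V E X B P) B"
  unfolding profile_spans_def
proof
  let ?S = "profile_sample V E X B P"
  fix u assume u: "u \<in> B - ?S"
  let ?\<pi> = "profile V E X u"
  have in_sample: "B \<inter> C \<subseteq> ?S" if "C \<in> P (profile V E X w)" "w \<in> B - X" for C w
    unfolding profile_sample_def using that by blast
  have "u \<notin> X" using u unfolding profile_sample_def by blast
  with \<open>B \<subseteq> V\<close> u have own: "u \<in> component_g V E X u" by (auto intro: self_in_component_g)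
  have "component_g V E X u \<in> components_with_profile V E X B ?\<pi>"
    unfolding components_with_profile_def using u \<open>u \<notin> X\<close> by auto
  with all_or_two u in_sample[of _ u] own \<open>u \<notin> X\<close> obtain C1 C2 where
    C: "C1 \<in> P ?\<pi>" "C2 \<in> P ?\<pi>" "C1 \<noteq> C2" by blast
  with sub obtain w1 w2 where w: "w1 \<in> B - X" "profile V E X w1 = ?\<pi>" "C1 = component_g V E X w1"
      "w2 \<in> B - X" "profile V E X w2 = ?\<pi>" "C2 = component_g V E X w2"
    unfolding components_with_profile_def by blast
  with \<open>B \<subseteq> V\<close> have "w1 \<in> C1" "w2 \<in> C2" by (auto intro: self_in_component_g)
  with C w in_sample[of C1 w1] in_sample[of C2 w2] have "w1 \<in> ?S" "w2 \<in> ?S" by auto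
  with C w \<open>u \<notin> X\<close> show "u \<notin> X \<and> (\<exists>w1 \<in> ?S - X. \<exists>w2 \<in> ?S - X.
      component_g V E X w1 \<noteq> component_g V E X w2 \<and>
      profile V E X w1 = ?\<pi> \<and> profile V E X w2 = ?\<pi>)" by blast
qed

lemma card_UN_le_mult:
  assumes "finite I" and "\<And>i. i \<in> I \<Longrightarrow> card (A i) \<le> n"
  shows "card (\<Union>i \<in> I. A i) \<le> card I * n"
proof -
  have "card (\<Union>i \<in> I. A i) \<le> (\<Sum>i \<in> I. card (A i))" using assms(1) by (rule card_UN_le)
  also have "\<dots> \<le> card I * n" using sum_bounded_above[of I "\<lambda>i. card (A i)" n] assms(2) by simp
  finally show ?thesis .
qed

lemma card_profile_sample_le:
  assumes "finite V" and "X \<subseteq> V" and "card X \<le> p"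
    and small: "\<forall>v \<in> V - X. card (component_g V E X v \<union> X) \<le> p" and "B \<subseteq> V"
    and sub: "\<And>\<pi>. P \<pi> \<subseteq> components_with_profile V E X B \<pi>"
    and "\<And>\<pi>. finite (P \<pi>)" and "\<And>\<pi>. card (P \<pi>) \<le> 2"
  shows "card (profile_sample V E X B P) \<le> p + (p * p + 2) ^ p * (2 * p)"
proof -
  have "card (B \<inter> C) \<le> p" if "C \<in> P \<pi>" for C \<pi>
  proof -
    from that sub obtain w where w: "w \<in> V - X" "C = component_g V E X w"
      using \<open>B \<subseteq> V\<close> unfolding components_with_profile_def by blast
    have "C \<union> X \<subseteq> V" using component_g_subset[of V E X w] w(2) assms(2) by blast
    then have "card (B \<inter> C) \<le> card (C \<union> X)"
      using \<open>finite V\<close> by (intro card_mono) (auto intro: finite_subset)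
    with small w show ?thesis by (metis le_trans)
  qed
  then have "card (\<Union>C \<in> P \<pi>. B \<inter> C) \<le> 2 * p" for \<pi>
    using card_UN_le_mult[OF \<open>finite (P \<pi>)\<close>, of "\<lambda>C. B \<inter> C" p] assms(8)[of \<pi>]
    by (meson le_trans mult_le_mono1)
  moreover have "card (profile V E X ` (B - X)) \<le> (p * p + 2) ^ p"
    using card_profiles_le[OF assms(1-4)] \<open>B \<subseteq> V\<close> by blast
  moreover have "finite (profile V E X ` (B - X))"
    using \<open>finite V\<close> \<open>B \<subseteq> V\<close> by (auto intro: finite_subset)
  ultimately have "card (\<Union>\<pi> \<in> profile V E X ` (B - X). \<Union>C \<in> P \<pi>. B \<inter> C) \<le> (p * p + 2) ^ p * (2 * p)"
    by (meson card_UN_le_mult le_trans mult_le_mono1)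
  moreover have "card (B \<inter> X) \<le> p"
    using assms(1-3) by (meson card_mono finite_subset inf_le2 le_trans)
  ultimately show ?thesis
    unfolding profile_sample_def by (meson add_mono card_Un_le le_trans)
qed

lemma ex_subset_all_or_two_distinct:
  "\<exists>P \<subseteq> Q. finite P \<and> card P \<le> 2 \<and> (Q \<subseteq> P \<or> (\<exists>a \<in> P. \<exists>b \<in> P. a \<noteq> b))"
proof (cases "\<exists>a \<in> Q. \<exists>b \<in> Q. a \<noteq> b")
  case True
  then obtain a b where "a \<in> Q" "b \<in> Q" "a \<noteq> b" by blast
  then show ?thesis by (intro exI[of _ "{a, b}"]) auto
next
  case False
  then have "Q = {} \<or> (\<exists>a. Q = {a})" by blast
  then show ?thesis by (intro exI[of _ Q]) auto
qed

lemma ex_small_profile_spanning_subset: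
  assumes "finite V" and "X \<subseteq> V" and "card X \<le> p"
    and "\<forall>v \<in> V - X. card (component_g V E X v \<union> X) \<le> p" and "B \<subseteq> V"
  shows "\<exists>S \<subseteq> B. card S \<le> p + (p * p + 2) ^ p * (2 * p) \<and> profile_spans V E X S B"
proof -
  let ?Q = "components_with_profile V E X B"
  have "\<forall>\<pi>. \<exists>P. P \<subseteq> ?Q \<pi> \<and> finite P \<and> card P \<le> 2 \<and>
      (?Q \<pi> \<subseteq> P \<or> (\<exists>C1 \<in> P. \<exists>C2 \<in> P. C1 \<noteq> C2))"
    using ex_subset_all_or_two_distinct by blast
  then obtain P where P: "\<And>\<pi>. P \<pi> \<subseteq> ?Q \<pi> \<and> finite (P \<pi>) \<and> card (P \<pi>) \<le> 2 \<and>
      (?Q \<pi> \<subseteq> P \<pi> \<or> (\<exists>C1 \<in> P \<pi>. \<exists>C2 \<in> P \<pi>. C1 \<noteq> C2))"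
    by metis
  have "profile_sample V E X B P \<subseteq> B" unfolding profile_sample_def by blast
  moreover have "card (profile_sample V E X B P) \<le> p + (p * p + 2) ^ p * (2 * p)"
    using card_profile_sample_le[OF assms] P by blast
  moreover have "profile_spans V E X (profile_sample V E X B P) B"
    using profile_spans_profile_sample[OF assms(5)] P by blast
  ultimately show ?thesis by blast
qed

lemma pos_nc_teaching_dim_le_if_determining_subsets:
  assumes "\<And>B. B \<in> \<B> \<Longrightarrow> \<exists>S \<subseteq> B. card S \<le> d \<and> (\<forall>B' \<in> \<B>. S \<subseteq> B' \<longrightarrow> B \<subseteq> B')"
  shows "pos_nc_teaching_dim \<B> \<le> d"
proof -
  from assms obtain T where T: "\<And>B. B \<in> \<B> \<Longrightarrow>
      T B \<subseteq> B \<and> card (T B) \<le> d \<and> (\<forall>B' \<in> \<B>. T B \<subseteq> B' \<longrightarrow> B \<subseteq> B')"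
    by metis
  have "positive_teaching_map T \<B>"
    unfolding positive_teaching_map_def using T by blast
  moreover have "non_clashing T \<B>"
    unfolding non_clashing_def using T by blast
  ultimately have "pos_nc_teaching_dim \<B> \<le> teaching_dim T \<B>"
    unfolding pos_nc_teaching_dim_def by (intro cInf_lower) auto
  also have "teaching_dim T \<B> \<le> d"
    unfolding teaching_dim_def using T by (cases "\<B> = {}") (auto intro: cSup_least)
  finally show ?thesis .
qed

lemma vertex_integrity_witness:
  obtains X where "X \<subseteq> V" and "card X \<le> vertex_integrity V E"
    and "\<forall>v \<in> V - X. card (component_g V E X v \<union> X) \<le> vertex_integrity V E"
proof -
  let ?K = "{b. \<exists>X \<subseteq> V. card X \<le> b \<and> (\<forall>v \<in> V - X. card (component_g V E X v \<union> X) \<le> b)}"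
  have "card V \<in> ?K" by auto
  then have "Inf ?K \<in> ?K" by (intro Inf_nat_def1) auto
  then show ?thesis using that unfolding vertex_integrity_def by blast
qed

lemma pos_nc_teaching_dim_balls_le:
  assumes "graph V E" and "\<B> \<subseteq> balls_g V E"
  defines "p \<equiv> vertex_integrity V E"
  shows "pos_nc_teaching_dim \<B> \<le> p + (p * p + 2) ^ p * (2 * p)"
proof (rule pos_nc_teaching_dim_le_if_determining_subsets)
  obtain X where X: "X \<subseteq> V" "card X \<le> p" "\<forall>v \<in> V - X. card (component_g V E X v \<union> X) \<le> p"
    unfolding p_def by (rule vertex_integrity_witness)
  have "finite V" using assms(1) unfolding graph_def by blast
  fix B assume "B \<in> \<B>"
  with assms(2) have "B \<subseteq> V" unfolding balls_g_def ball_g_def by blast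
  from ex_small_profile_spanning_subset[OF \<open>finite V\<close> X this] obtain S where
    S: "S \<subseteq> B" "card S \<le> p + (p * p + 2) ^ p * (2 * p)" "profile_spans V E X S B" by blast
  have "B \<subseteq> B'" if "B' \<in> \<B>" and "S \<subseteq> B'" for B'
  proof -
    from \<open>B' \<in> \<B>\<close> assms(2) obtain r v where "B' = ball_g V E r v" unfolding balls_g_def by blast
    with ball_g_superset_if_profile_spans[OF assms(1) \<open>B \<subseteq> V\<close> _ S(3)] \<open>S \<subseteq> B'\<close>
    show ?thesis by blast
  qed
  with S show "\<exists>S \<subseteq> B. card S \<le> p + (p * p + 2) ^ p * (2 * p) \<and> (\<forall>B' \<in> \<B>. S \<subseteq> B' \<longrightarrow> B \<subseteq> B')"
    by blast
qed

lemma teaching_bound_le_exp: "p + (p * p + 2) ^ p * (2 * p) \<le> (2::nat) ^ (6 * p ^ 3)"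
proof (cases "p = 0")
  case False
  define q where "q = p * p + 2"
  have "p + 1 \<le> 2 ^ p" using less_exp[of p] by linarith
  then have "(p + 1) ^ 2 \<le> (2 ^ p) ^ 2" by (rule power_mono) simp
  moreover have "q \<le> (p + 1) ^ 2" using False unfolding q_def by (simp add: power2_eq_square)
  ultimately have q_le: "q \<le> 2 ^ (2 * p)" by (simp add: power_mult[symmetric] mult.commute)
  have "2 * p \<le> q"
  proof (cases "p = 1")
    case False
    with \<open>p \<noteq> 0\<close> have "2 * p \<le> p * p" by (intro mult_right_mono) auto
    then show ?thesis unfolding q_def by linarith
  qed (simp add: q_def)
  moreover have "2 \<le> q" unfolding q_def by simp
  ultimately have "p \<le> q" by linarith
  with \<open>2 * p \<le> q\<close> have "p + q ^ p * (2 * p) \<le> q + q ^ p * q" by (intro add_mono mult_le_mono) auto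
  also have "\<dots> \<le> 2 * q ^ (p + 1)" by simp
  also have "\<dots> \<le> q * q ^ (p + 1)" using \<open>2 \<le> q\<close> by (rule mult_right_mono) simp
  also have "\<dots> = q ^ (p + 2)" by simp
  also have "\<dots> \<le> (2 ^ (2 * p)) ^ (p + 2)" using q_le by (rule power_mono) simp
  also have "\<dots> = 2 ^ (2 * p * (p + 2))" by (rule power_mult[symmetric])
  also have "\<dots> \<le> 2 ^ (6 * p ^ 3)"
  proof (rule power_increasing)
    have "p * p \<le> p ^ 3" and "p \<le> p ^ 3" using False by (auto simp: power3_eq_cube)
    then show "2 * p * (p + 2) \<le> 6 * p ^ 3" by (simp add: algebra_simps)
  qed simp
  finally show ?thesis unfolding q_def .
qed simp

theorem corollary10:
  "\<exists>s :: nat \<Rightarrow> nat. (\<exists>C::real. \<forall>\<^sub>F p in at_top. real (s p) \<le> 2 powr (C * real p ^ 3)) \<and>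
     (\<forall>(V :: 'a set) E \<B>. graph V E \<longrightarrow> \<B> \<subseteq> balls_g V E \<longrightarrow>
        pos_nc_teaching_dim \<B> \<le> s (vertex_integrity V E))"
proof (intro exI conjI allI impI)
  let ?s = "\<lambda>p::nat. (2::nat) ^ (6 * p ^ 3)"
  show "\<forall>\<^sub>F p in at_top. real (?s p) \<le> 2 powr (6 * real p ^ 3)"
  proof (intro always_eventually allI)
    fix p :: nat
    have "(2::real) powr (6 * real p ^ 3) = 2 ^ (6 * p ^ 3)"
      by (simp flip: powr_realpow)
    then show "real (?s p) \<le> 2 powr (6 * real p ^ 3)" by simp
  qed
  fix V :: "'a set" and E \<B>
  assume "graph V E" and "\<B> \<subseteq> balls_g V E"
  then show "pos_nc_teaching_dim \<B> \<le> ?s (vertex_integrity V E)"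
    using pos_nc_teaching_dim_balls_le teaching_bound_le_exp le_trans by blast
qed

end
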